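(* Let $(\Omega,\mathcal A)$ be a measurable space admitting a universally consistent learning rule $\mathcal L$. Then for every subset $Y\subseteq\Omega$, the restriction $\mathcal L|_Y$ is a universally consistent learning rule for the measurable subspace $(Y,\mathcal A|_Y)$, where $\mathcal A|_Y=\{A\cap Y: A\in\mathcal A\}$.
   Context: For a measurable space $(\Omega,\mathcal A)$, give $\Omega\times\{0,1\}$ the product $\sigma$-algebra. A classifier is a measurable map $T:\Omega\to\{0,1\}$. A learning rule $\mathcal L$ is a family of maps $\mathcal L_n:\Omega^n\times\{0,1\}^n\times\Omega\to\{0,1\}$, $(\sigma,x)\mapsto\mathcal L_n(\sigma)(x)$, $n\ge1$, each measurable with respect to the product $\sigma$-algebra. For a probability measure $\tilde\mu$ on $\Omega\times\{0,1\}$, $\mathrm{err}_{\tilde\mu}(\mathcal L_n)=(\tilde\mu^n\otimes\tilde\mu)\{(\sigma,x,y):\mathcal L_n(\sigma)(x)\ne y\}$, and the Bayes error is $\ell^*(\tilde\mu)=\inf_T\tilde\mu\{(x,y):T(x)\ne y\}$ over all classifiers $T$. $\mathcal L$ is universally consistent if $\mathrm{err}_{\tilde\mu}(\mathcal L_n)\to\ell^*(\tilde\mu)$ as $n\to\infty$ for every probability measure $\tilde\mu$ on $\Omega\times\{0,1\}$. The restriction $\mathcal L|_Y$ is defined by $(\mathcal L|_Y)_n=\mathcal L_n|_{Y^n\times\{0,1\}^n\times Y}$. *)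

theory Defs
  imports "HOL-Probability.Probability"
begin

text \<open>Labels {0,1} are encoded as bool. A labelled point is an element of
  'a \<times> bool; the label space carries the discrete sigma algebra.\<close>

definition labelled :: "'a measure \<Rightarrow> ('a \<times> bool) measure" where
  "labelled M = M \<Otimes>\<^sub>M count_space UNIV"

text \<open>A sample of size n is an element of (\<Omega> \<times> {0,1})^n, encoded as a
  function on {..<n}.\<close>
definition sample_space :: "'a measure \<Rightarrow> nat \<Rightarrow> (nat \<Rightarrow> 'a \<times> bool) measure" where
  "sample_space M n = PiM {..<n} (\<lambda>_. labelled M)"

definition learning_rule ::
  "'a measure \<Rightarrow> (nat \<Rightarrow> (nat \<Rightarrow> 'a \<times> bool) \<Rightarrow> 'a \<Rightarrow> bool) \<Rightarrow> bool" where
  "learning_rule M L \<longleftrightarrow>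
     (\<forall>n\<ge>1. (\<lambda>(\<sigma>, x). L n \<sigma> x) \<in> measurable (sample_space M n \<Otimes>\<^sub>M M) (count_space UNIV))"

definition is_label_prob :: "'a measure \<Rightarrow> ('a \<times> bool) measure \<Rightarrow> bool" where
  "is_label_prob M \<mu> \<longleftrightarrow> prob_space \<mu> \<and> sets \<mu> = sets (labelled M)"

definition err ::
  "('a \<times> bool) measure \<Rightarrow> (nat \<Rightarrow> (nat \<Rightarrow> 'a \<times> bool) \<Rightarrow> 'a \<Rightarrow> bool) \<Rightarrow> nat \<Rightarrow> real" where
  "err \<mu> L n = measure (PiM {..<n} (\<lambda>_. \<mu>) \<Otimes>\<^sub>M \<mu>)
     ({(\<sigma>, (x, y)). L n \<sigma> x \<noteq> y} \<inter> space (PiM {..<n} (\<lambda>_. \<mu>) \<Otimes>\<^sub>M \<mu>))"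

definition classifier :: "'a measure \<Rightarrow> ('a \<Rightarrow> bool) \<Rightarrow> bool" where
  "classifier M T \<longleftrightarrow> T \<in> measurable M (count_space UNIV)"

definition bayes_error :: "'a measure \<Rightarrow> ('a \<times> bool) measure \<Rightarrow> real" where
  "bayes_error M \<mu> = (INF T\<in>{T. classifier M T}. measure \<mu> ({(x, y). T x \<noteq> y} \<inter> space \<mu>))"

definition universally_consistent ::
  "'a measure \<Rightarrow> (nat \<Rightarrow> (nat \<Rightarrow> 'a \<times> bool) \<Rightarrow> 'a \<Rightarrow> bool) \<Rightarrow> bool" where
  "universally_consistent M L \<longleftrightarrow> learning_rule M L \<and>
     (\<forall>\<mu>. is_label_prob M \<mu> \<longrightarrow> (\<lambda>n. err \<mu> L n) \<longlonglongrightarrow> bayes_error M \<mu>)"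

end

theory Submission
  imports Defs
begin

text \<open>A labelled distribution \<mu> on Y \<times> {0,1} is pushed forward along the inclusion to a
  distribution \<nu> on \<Omega> \<times> {0,1}. Since \<mu>-samples are \<nu>-samples and L is applied to the same
  points, L has the same error under \<mu> and \<nu>. The Bayes errors agree as well: every
  classifier on \<Omega> restricts to one on Y, every classifier on Y is the trace of an indicator
  of a measurable subset of \<Omega>, and the error of a classifier under \<mu> only depends on its
  values on Y.\<close>

lemma measurable_labelled_ident:
  assumes "(\<lambda>x. x) \<in> N \<rightarrow>\<^sub>M M"
  shows "(\<lambda>z. z) \<in> labelled N \<rightarrow>\<^sub>M labelled M"
  using measurable_Pair[OF measurable_compose[OF measurable_fst assms] measurable_snd]
  by (simp add: labelled_def)

lemma measurable_PiM_ident: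
  assumes "(\<lambda>x. x) \<in> N \<rightarrow>\<^sub>M M"
  shows "(\<lambda>\<omega>. \<omega>) \<in> PiM I (\<lambda>_. N) \<rightarrow>\<^sub>M PiM I (\<lambda>_. M)"
proof -
  have "(\<lambda>\<omega> i. \<omega> i) \<in> PiM I (\<lambda>_. N) \<rightarrow>\<^sub>M PiM I (\<lambda>_. M)"
  proof (rule measurable_PiM_single')
    show "(\<lambda>\<omega>. \<omega> i) \<in> PiM I (\<lambda>_. N) \<rightarrow>\<^sub>M M" if "i \<in> I" for i
      using measurable_compose[OF measurable_component_singleton[OF that] assms] .
    show "(\<lambda>\<omega> i. \<omega> i) \<in> space (PiM I (\<lambda>_. N)) \<rightarrow> (\<Pi>\<^sub>E i\<in>I. space M)"
      using measurable_space[OF assms] by (auto simp: space_PiM PiE_iff)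
  qed
  then show ?thesis by simp
qed

lemma learning_rule_mono:
  assumes "(\<lambda>x. x) \<in> N \<rightarrow>\<^sub>M M" and "learning_rule M L"
  shows "learning_rule N L"
  unfolding learning_rule_def
proof (intro allI impI)
  fix n :: nat assume "n \<ge> 1"
  then have L: "(\<lambda>(\<sigma>, x). L n \<sigma> x) \<in> sample_space M n \<Otimes>\<^sub>M M \<rightarrow>\<^sub>M count_space UNIV"
    using assms(2) by (simp add: learning_rule_def)
  have "(\<lambda>\<sigma>. \<sigma>) \<in> sample_space N n \<rightarrow>\<^sub>M sample_space M n"
    unfolding sample_space_def by (rule measurable_PiM_ident[OF measurable_labelled_ident[OF assms(1)]])
  then have "(\<lambda>p. (fst p, snd p)) \<in> sample_space N n \<Otimes>\<^sub>M N \<rightarrow>\<^sub>M sample_space M n \<Otimes>\<^sub>M M"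
    by (rule measurable_Pair[OF measurable_compose[OF measurable_fst] measurable_compose[OF measurable_snd assms(1)]])
  from measurable_compose[OF this L]
  show "(\<lambda>(\<sigma>, x). L n \<sigma> x) \<in> sample_space N n \<Otimes>\<^sub>M N \<rightarrow>\<^sub>M count_space UNIV"
    by simp
qed

lemma measure_distr_ident:
  assumes "(\<lambda>x. x) \<in> M \<rightarrow>\<^sub>M N" and "A \<inter> space N \<in> sets N"
  shows "measure (distr M N (\<lambda>x. x)) (A \<inter> space N) = measure M (A \<inter> space M)"
proof -
  have "space M \<subseteq> space N"
    using measurable_space[OF assms(1)] by auto
  then show ?thesis
    using measure_distr[OF assms] by (simp add: Int_assoc Int_absorb1)
qed

lemma PiM_distr_ident:
  assumes "finite I" and "prob_space \<mu>" and "(\<lambda>x. x) \<in> \<mu> \<rightarrow>\<^sub>M N"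
  shows "PiM I (\<lambda>_. distr \<mu> N (\<lambda>x. x)) = distr (PiM I (\<lambda>_. \<mu>)) (PiM I (\<lambda>_. N)) (\<lambda>\<omega>. \<omega>)"
proof -
  let ?\<nu> = "distr \<mu> N (\<lambda>x. x)"
  have "(\<lambda>x. x) \<in> \<mu> \<rightarrow>\<^sub>M ?\<nu>"
    using assms(3) by (simp cong: measurable_cong_sets)
  moreover have "distr \<mu> ?\<nu> (\<lambda>x. x) = ?\<nu>"
    by (rule distr_cong) auto
  moreover have "prob_space ?\<nu>"
    using assms(2,3) by (rule prob_space.prob_space_distr)
  ultimately have "PiM I (\<lambda>_. ?\<nu>) = distr (PiM I (\<lambda>_. \<mu>)) (PiM I (\<lambda>_. ?\<nu>)) (compose I (\<lambda>x. x))"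
    using distr_PiM_finite_prob_space'[of I "\<lambda>_. \<mu>" "\<lambda>_. ?\<nu>" "\<lambda>x. x"] assms(1,2) by simp
  also have "\<dots> = distr (PiM I (\<lambda>_. \<mu>)) (PiM I (\<lambda>_. N)) (\<lambda>\<omega>. \<omega>)"
    by (intro distr_cong refl sets_PiM_cong) (simp_all add: compose_def space_PiM)
  finally show ?thesis .
qed

lemma pred_Int_space_sets:
  assumes "Measurable.pred M P"
  shows "Collect P \<inter> space M \<in> sets M"
  using predE[OF assms] by (simp add: Int_def conj_commute)

lemma learning_rule_error_sets:
  assumes "learning_rule M L" and "n \<ge> 1"
  shows "{(\<sigma>, x, y). L n \<sigma> x \<noteq> y} \<inter> space (sample_space M n \<Otimes>\<^sub>M labelled M)
    \<in> sets (sample_space M n \<Otimes>\<^sub>M labelled M)"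
proof (rule pred_Int_space_sets)
  have "(\<lambda>(\<sigma>, x). L n \<sigma> x) \<in> sample_space M n \<Otimes>\<^sub>M M \<rightarrow>\<^sub>M count_space UNIV"
    using assms by (simp add: learning_rule_def)
  moreover have "(\<lambda>p. (fst p, fst (snd p))) \<in> sample_space M n \<Otimes>\<^sub>M labelled M \<rightarrow>\<^sub>M sample_space M n \<Otimes>\<^sub>M M"
    unfolding labelled_def by measurable
  ultimately have "(\<lambda>p. L n (fst p) (fst (snd p))) \<in> sample_space M n \<Otimes>\<^sub>M labelled M \<rightarrow>\<^sub>M count_space UNIV"
    by (simp add: measurable_compose[rotated])
  then show "Measurable.pred (sample_space M n \<Otimes>\<^sub>M labelled M) (\<lambda>(\<sigma>, x, y). L n \<sigma> x \<noteq> y)"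
    unfolding labelled_def split_beta' by measurable
qed

lemma err_distr_ident:
  assumes "prob_space \<mu>" and "(\<lambda>z. z) \<in> \<mu> \<rightarrow>\<^sub>M labelled M"
    and "learning_rule M L" and "n \<ge> 1"
  shows "err (distr \<mu> (labelled M) (\<lambda>z. z)) L n = err \<mu> L n"
proof -
  define \<nu> where "\<nu> = distr \<mu> (labelled M) (\<lambda>z. z)"
  let ?P = "PiM {..<n} (\<lambda>_. \<mu>)" and ?S = "sample_space M n \<Otimes>\<^sub>M labelled M"
  have sample: "(\<lambda>\<omega>. \<omega>) \<in> ?P \<rightarrow>\<^sub>M sample_space M n"
    unfolding sample_space_def using assms(2) by (rule measurable_PiM_ident)
  have "prob_space \<nu>"
    unfolding \<nu>_def using assms(1,2) by (rule prob_space.prob_space_distr)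
  then have "PiM {..<n} (\<lambda>_. \<nu>) \<Otimes>\<^sub>M \<nu> = distr (?P \<Otimes>\<^sub>M \<mu>) ?S (\<lambda>p. p)"
    using pair_measure_distr[OF sample assms(2)] PiM_distr_ident[OF finite_lessThan assms(1,2)]
    unfolding \<nu>_def sample_space_def by (simp add: prob_space_imp_sigma_finite id_def)
  moreover have "(\<lambda>p. p) \<in> ?P \<Otimes>\<^sub>M \<mu> \<rightarrow>\<^sub>M ?S"
    using measurable_Pair[OF measurable_compose[OF measurable_fst sample]
        measurable_compose[OF measurable_snd assms(2)]] by simp
  ultimately show ?thesis
    using measure_distr_ident learning_rule_error_sets[OF assms(3,4)]
    unfolding err_def \<nu>_def[symmetric] by simp
qed

lemma is_label_prob_measurable_ident:
  assumes "is_label_prob N \<mu>" and "(\<lambda>x. x) \<in> N \<rightarrow>\<^sub>M M"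
  shows "(\<lambda>z. z) \<in> \<mu> \<rightarrow>\<^sub>M labelled M"
  using measurable_labelled_ident[OF assms(2)] assms(1)
  by (simp add: is_label_prob_def cong: measurable_cong_sets)

lemma is_label_prob_distr_ident:
  assumes "is_label_prob N \<mu>" and "(\<lambda>x. x) \<in> N \<rightarrow>\<^sub>M M"
  shows "is_label_prob M (distr \<mu> (labelled M) (\<lambda>z. z))"
  using prob_space.prob_space_distr[OF _ is_label_prob_measurable_ident[OF assms]] assms(1)
  by (simp add: is_label_prob_def)

lemma classifier_error_sets:
  assumes "classifier N T"
  shows "{(x, y). T x \<noteq> y} \<inter> space (labelled N) \<in> sets (labelled N)"
proof (rule pred_Int_space_sets)
  show "Measurable.pred (labelled N) (\<lambda>(x, y). T x \<noteq> y)"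
    using assms unfolding classifier_def labelled_def split_beta' by measurable
qed

lemma classifier_restrict_space_extend:
  assumes "classifier (restrict_space M Y) T"
  obtains T' where "classifier M T'" and "\<And>x. x \<in> Y \<inter> space M \<Longrightarrow> T' x = T x"
proof -
  have "T -` {True} \<inter> space (restrict_space M Y) \<in> sets (restrict_space M Y)"
    using assms by (simp add: classifier_def measurable_sets)
  then obtain A where A: "A \<in> sets M" and TA: "T -` {True} \<inter> (Y \<inter> space M) = Y \<inter> A"
    by (auto simp: sets_restrict_space space_restrict_space)
  have "classifier M (\<lambda>x. x \<in> A)"
    unfolding classifier_def using A by measurable
  moreover have "(x \<in> A) = T x" if "x \<in> Y \<inter> space M" for x
    using TA that by blast
  ultimately show ?thesis using that by blast
qed

lemma bayes_error_distr_restrict_space: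
  assumes "is_label_prob (restrict_space M Y) \<mu>"
  shows "bayes_error M (distr \<mu> (labelled M) (\<lambda>z. z)) = bayes_error (restrict_space M Y) \<mu>"
proof -
  define \<nu> where "\<nu> = distr \<mu> (labelled M) (\<lambda>z. z)"
  let ?err = "\<lambda>\<mu> T. measure \<mu> ({(x, y). T x \<noteq> y} \<inter> space \<mu>)"
  have Y: "(\<lambda>x. x) \<in> restrict_space M Y \<rightarrow>\<^sub>M M"
    by (rule measurable_restrict_space1[OF measurable_id])
  have "sets \<mu> = sets (labelled (restrict_space M Y))"
    using assms by (simp add: is_label_prob_def)
  from sets_eq_imp_space_eq[OF this] have space_\<mu>: "space \<mu> = (Y \<inter> space M) \<times> UNIV"
    by (simp add: labelled_def space_pair_measure space_restrict_space)
  have err_\<nu>: "?err \<nu> T = ?err \<mu> T" if "classifier M T" for T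
    using measure_distr_ident[OF is_label_prob_measurable_ident[OF assms Y] classifier_error_sets[OF that]]
    unfolding \<nu>_def by simp
  have "?err \<nu> ` {T. classifier M T} = ?err \<mu> ` {T. classifier (restrict_space M Y) T}"
  proof (intro equalityI image_subsetI)
    fix T assume "T \<in> {T. classifier M T}"
    then show "?err \<nu> T \<in> ?err \<mu> ` {T. classifier (restrict_space M Y) T}"
      using err_\<nu> by (auto simp: classifier_def measurable_restrict_space1)
  next
    fix T assume "T \<in> {T. classifier (restrict_space M Y) T}"
    then obtain T' where T': "classifier M T'" and "\<And>x. x \<in> Y \<inter> space M \<Longrightarrow> T' x = T x"
      using classifier_restrict_space_extend by blast
    then have "?err \<mu> T = ?err \<nu> T'"
      using err_\<nu>[OF T'] space_\<mu> by (auto intro!: arg_cong[where f = "measure \<mu>"])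
    then show "?err \<mu> T \<in> ?err \<nu> ` {T. classifier M T}"
      using T' by blast
  qed
  then show ?thesis
    unfolding bayes_error_def \<nu>_def by simp
qed

theorem mainTheorem3:
  fixes M :: "'a measure" and L :: "nat \<Rightarrow> (nat \<Rightarrow> 'a \<times> bool) \<Rightarrow> 'a \<Rightarrow> bool"
    and Y :: "'a set"
  assumes "universally_consistent M L"
    and "Y \<subseteq> space M"
  shows "universally_consistent (restrict_space M Y) L"
proof -
  have Y: "(\<lambda>x. x) \<in> restrict_space M Y \<rightarrow>\<^sub>M M"
    by (rule measurable_restrict_space1[OF measurable_id])
  have L: "learning_rule M L"
    and consistent: "\<And>\<nu>. is_label_prob M \<nu> \<Longrightarrow> (\<lambda>n. err \<nu> L n) \<longlonglongrightarrow> bayes_error M \<nu>"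
    using assms(1) by (auto simp: universally_consistent_def)
  have "(\<lambda>n. err \<mu> L n) \<longlonglongrightarrow> bayes_error (restrict_space M Y) \<mu>"
    if \<mu>: "is_label_prob (restrict_space M Y) \<mu>" for \<mu>
  proof -
    let ?\<nu> = "distr \<mu> (labelled M) (\<lambda>z. z)"
    have "(\<lambda>n. err ?\<nu> L n) \<longlonglongrightarrow> bayes_error (restrict_space M Y) \<mu>"
      using consistent[OF is_label_prob_distr_ident[OF \<mu> Y]] bayes_error_distr_restrict_space[OF \<mu>] by simp
    moreover have "\<forall>\<^sub>F n in sequentially. err ?\<nu> L n = err \<mu> L n"
      using err_distr_ident[OF _ is_label_prob_measurable_ident[OF \<mu> Y] L] \<mu>
      by (auto simp: is_label_prob_def eventually_sequentially)
    ultimately show ?thesis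
      by (rule Lim_transform_eventually)
  qed
  then show ?thesis
    using learning_rule_mono[OF Y L] by (simp add: universally_consistent_def)
qed

end
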